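(* Fix $\tilde r^2>0$ and $\tilde\sigma^2>0$. Let $C_1$ and $C_2$ be two limiting causal models in the same observational family, with parameters $(\omega_i^2,\eta_i)$, $i=1,2$, and confounding strengths $\zeta_i=(\omega_i^2+\eta_i)/\tilde r^2$. If $\zeta_1>\zeta_2$ and $\eta_1\le\eta_2$, then for all $\lambda,\gamma\in(0,\infty)$, $$\mathcal R^{C_1}_\lambda(\gamma)>\mathcal R^{C_2}_\lambda(\gamma).$$ In particular, for any fixed $\eta$ (for example $\eta=0$), the limiting causal risk at every $\lambda>0$ is strictly increasing in $\zeta$.
   Context: Setting: isotropic linear causal models $z\sim\mathcal N(0,I_l)$, $\varepsilon\sim\mathcal N(0,\sigma^2)$, $x=Mz$ with $MM^T=I_d$, and $y=x^T\beta+z^T\alpha+\varepsilon$. Write $\Gamma=M\alpha$ (the confounding parameter), $\tilde\beta=\beta+\Gamma$ (the statistical parameter) and $\tilde\sigma^2=\sigma^2+\|\alpha\|^2-\|\Gamma\|^2$. Asymptotically the model is summarized by $\|\beta\|^2=r^2$, $\|\Gamma\|^2=\omega^2$, $\langle\Gamma,\beta\rangle=\eta$ and $\tilde\sigma^2$, with $\tilde r^2=r^2+\omega^2+2\eta=\|\tilde\beta\|^2$. Observational family: models entailing the same observational distribution share $\tilde\beta$ and $\tilde\sigma^2$. Here this means fixed $\tilde r^2$ and $\tilde\sigma^2$, while $(\omega^2,\eta)$, and hence $r^2=\tilde r^2-\omega^2-2\eta$, may vary. Confounding strength: $\zeta=\langle\Gamma,\tilde\beta\rangle/\|\tilde\beta\|^2=(\omega^2+\eta)/\tilde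 r^2$. Limiting causal risk of ridge regression with parameter $\lambda>0$ at overparameterization ratio $\gamma=\lim d/n$: $$\mathcal R_\lambda(\gamma)=\omega^2+\tilde r^2\lambda^2m'(-\lambda)-2(\omega^2+\eta)\lambda m(-\lambda)+\tilde\sigma^2\gamma\big(m(-\lambda)-\lambda m'(-\lambda)\big)+\tilde\sigma^2+\omega^2,$$ where $m(z)=\frac{(1-\gamma-z)-\sqrt{(1-\gamma-z)^2-4\gamma z}}{2\gamma z}$ and $m'$ is its derivative. $\mathcal R^{C_i}_\lambda$ denotes this quantity computed with the parameters of $C_i$. *)

theory Defs
  imports "HOL-Analysis.Analysis"
begin

text \<open>Stieltjes transform of the Marchenko--Pastur law (real arguments z < 0),
  overparameterization ratio gamma.\<close>
definition mp_m :: "real \<Rightarrow> real \<Rightarrow> real" where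
  "mp_m \<gamma> z = ((1 - \<gamma> - z) - sqrt ((1 - \<gamma> - z)^2 - 4 * \<gamma> * z)) / (2 * \<gamma> * z)"

text \<open>Limiting causal risk of ridge regression. Arguments: rt2 = tilde r^2,
  sigt2 = tilde sigma^2, om2 = omega^2, eta, lambda, gamma.\<close>
definition causal_risk :: "real \<Rightarrow> real \<Rightarrow> real \<Rightarrow> real \<Rightarrow> real \<Rightarrow> real \<Rightarrow> real" where
  "causal_risk rt2 sigt2 om2 \<eta> lam \<gamma> =
     om2 + rt2 * lam^2 * deriv (mp_m \<gamma>) (-lam)
     - 2 * (om2 + \<eta>) * lam * mp_m \<gamma> (-lam)
     + sigt2 * \<gamma> * (mp_m \<gamma> (-lam) - lam * deriv (mp_m \<gamma>) (-lam))
     + sigt2 + om2"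

definition conf_strength :: "real \<Rightarrow> real \<Rightarrow> real \<Rightarrow> real" where
  "conf_strength rt2 om2 \<eta> = (om2 + \<eta>) / rt2"

text \<open>Admissible limiting parameters within the observational family with fixed tilde r^2:
  omega^2 = ||Gamma||^2 \<ge> 0, r^2 = tilde r^2 - omega^2 - 2 eta = ||beta||^2 \<ge> 0,
  and Cauchy--Schwarz eta^2 = <Gamma,beta>^2 \<le> r^2 omega^2.\<close>
definition admissible_model :: "real \<Rightarrow> real \<Rightarrow> real \<Rightarrow> bool" where
  "admissible_model rt2 om2 \<eta> \<longleftrightarrow>
     om2 \<ge> 0 \<and> rt2 - om2 - 2 * \<eta> \<ge> 0 \<and> \<eta>^2 \<le> (rt2 - om2 - 2 * \<eta>) * om2"

end

theory Submission
  imports Defs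
begin

text \<open>Two models of one observational family differ only in \<open>(\<omega>\<^sup>2, \<eta>)\<close>, and the
  terms of the risk involving \<open>m'\<close> or \<open>\<sigma>\<^sup>2\<close> cancel. Writing \<open>t = \<lambda> m(-\<lambda>)\<close>, the risk
  gap is \<open>2 (\<zeta>\<^sub>1 - \<zeta>\<^sub>2) r\<^sup>2 (1 - t) + 2 (\<eta>\<^sub>2 - \<eta>\<^sub>1)\<close>, which is positive because
  \<open>t < 1\<close>: this is \<open>\<surd>D < 1 + \<gamma> + \<lambda>\<close> for the discriminant \<open>D\<close> in \<open>m(-\<lambda>)\<close>.\<close>

lemma mp_m_neg_mult_less_one:
  fixes lam \<gamma> :: real
  assumes "lam > 0" "\<gamma> > 0"
  shows "lam * mp_m \<gamma> (-lam) < 1"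
proof -
  define a where "a = 1 - \<gamma> + lam"
  define D where "D = a\<^sup>2 + 4 * \<gamma> * lam"
  have discr: "(1 - \<gamma> - (-lam))\<^sup>2 - 4 * \<gamma> * (-lam) = D"
    by (simp add: D_def a_def)
  have "D < (1 + \<gamma> + lam)\<^sup>2"
    using assms by (simp add: D_def a_def power2_eq_square algebra_simps)
  moreover have "D \<ge> 0"
    using assms by (simp add: D_def)
  ultimately have sqrt_D: "sqrt D < 1 + \<gamma> + lam"
    using assms real_sqrt_less_iff[of D "(1 + \<gamma> + lam)\<^sup>2"] by simp
  have "lam * mp_m \<gamma> (-lam) = (sqrt D - a) / (2 * \<gamma>)"
    using assms unfolding mp_m_def discr by (simp add: a_def field_simps)
  also have "\<dots> < 1"
    using sqrt_D assms by (simp add: a_def field_simps)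
  finally show ?thesis .
qed

lemma causal_risk_diff:
  "causal_risk rt2 sigt2 om1 eta1 lam \<gamma> - causal_risk rt2 sigt2 om2 eta2 lam \<gamma>
     = 2 * ((om1 + eta1) - (om2 + eta2)) * (1 - lam * mp_m \<gamma> (-lam)) + 2 * (eta2 - eta1)"
  by (simp add: causal_risk_def algebra_simps)

theorem proposition2:
  fixes rt2 sigt2 om1 eta1 om2 eta2 :: real
  assumes "rt2 > 0" and "sigt2 > 0"
    and "admissible_model rt2 om1 eta1" and "admissible_model rt2 om2 eta2"
    and "conf_strength rt2 om1 eta1 > conf_strength rt2 om2 eta2"
    and "eta1 \<le> eta2"
  shows "\<forall>lam::real > 0. \<forall>\<gamma> > 0.
           causal_risk rt2 sigt2 om1 eta1 lam \<gamma> > causal_risk rt2 sigt2 om2 eta2 lam \<gamma>"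
proof (intro allI impI)
  fix lam \<gamma> :: real
  assume "lam > 0" and "\<gamma> > 0"
  then have "1 - lam * mp_m \<gamma> (-lam) > 0"
    using mp_m_neg_mult_less_one by simp
  moreover have "(om1 + eta1) - (om2 + eta2) > 0"
    using assms(1,5) by (simp add: conf_strength_def divide_less_cancel)
  ultimately have "causal_risk rt2 sigt2 om1 eta1 lam \<gamma> - causal_risk rt2 sigt2 om2 eta2 lam \<gamma> > 0"
    unfolding causal_risk_diff using assms(6) by (simp add: add_pos_nonneg)
  then show "causal_risk rt2 sigt2 om1 eta1 lam \<gamma> > causal_risk rt2 sigt2 om2 eta2 lam \<gamma>"
    by simp
qed

end
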